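(* Let $G=(V,E,w)$ be an undirected graph without self-loops, with at least two vertices, positive edge weights and conductance $\Phi_G$, and let $\mathcal{T}$ be any HC tree of $G$. Let $(A_0,A_1,\dots,A_k)$, $k\ge 0$, be the dense branch of $\mathcal{T}$, and for $1\le i\le k$ let $B_i$ be the sibling of $A_i$. Then \begin{enumerate} \item $\mathrm{cost}_G(\mathcal{T}) \ge \frac{\Phi_G}{2}\sum_{i=1}^k |A_{i-1}|\cdot\mathrm{vol}(B_i)$; \item $\mathrm{cost}_G(\mathcal{T}) \ge \frac{\Phi_G}{2}\cdot |A_k|\cdot \mathrm{vol}(A_k)$. \end{enumerate}
   Context: $d_u=\sum_v w_{uv}$, $\mathrm{vol}(S)=\sum_{u\in S}d_u$, $\mathrm{vol}(G)=\mathrm{vol}(V)$. Conductance: $\Phi_G(S)=w(S,V\setminus S)/\mathrm{vol}(S)$ and $\Phi_G=\min\{\Phi_G(S):\emptyset\ne S\subset V,\ \mathrm{vol}(S)\le\mathrm{vol}(V)/2\}$. An HC tree is a rooted binary tree whose leaves are in bijection with $V$; each node is identified with the set of vertices at the leaves of its subtree, and $|N|$ denotes the number of such vertices. $\mathrm{cost}_G(\mathcal{T})=\sum_{\{u,v\}\in E}w_{uv}|\mathsf{leaves}(\mathcal{T}[u\vee v])|$ with $u\vee v$ the lowest common ancestor. Dense branch: the path $(A_0,\dots,A_k)$ in $\mathcal{T}$ where $A_0$ is the root, each $A_{i+1}$ is the child of $A_i$ of larger volume, and $A_k$ is the node with $\mathrm{vol}(A_k)>\mathrm{vol}(G)/2$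 both of whose children have volume at most $\mathrm{vol}(G)/2$ (equivalently, the dense branch consists of all nodes of volume $>\mathrm{vol}(G)/2$). *)

theory Defs
  imports Complex_Main
begin

(* Weighted undirected graph G = (V, E, w): E is a set of 2-element subsets of V,
   w assigns a weight to each edge. *)

definition degree :: "'a set set \<Rightarrow> ('a set \<Rightarrow> real) \<Rightarrow> 'a \<Rightarrow> real" where
  "degree E w u = (\<Sum>e\<in>{e\<in>E. u \<in> e}. w e)"

definition vol :: "'a set set \<Rightarrow> ('a set \<Rightarrow> real) \<Rightarrow> 'a set \<Rightarrow> real" where
  "vol E w S = (\<Sum>u\<in>S. degree E w u)"

definition cut_weight :: "'a set \<Rightarrow> 'a set set \<Rightarrow> ('a set \<Rightarrow> real) \<Rightarrow> 'a set \<Rightarrow> real" where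
  "cut_weight V E w S = (\<Sum>e\<in>{e\<in>E. e \<inter> S \<noteq> {} \<and> e \<inter> (V - S) \<noteq> {}}. w e)"

definition set_conductance :: "'a set \<Rightarrow> 'a set set \<Rightarrow> ('a set \<Rightarrow> real) \<Rightarrow> 'a set \<Rightarrow> real" where
  "set_conductance V E w S = cut_weight V E w S / vol E w S"

definition conductance :: "'a set \<Rightarrow> 'a set set \<Rightarrow> ('a set \<Rightarrow> real) \<Rightarrow> real" where
  "conductance V E w = Min (set_conductance V E w `
      {S. S \<noteq> {} \<and> S \<subset> V \<and> vol E w S \<le> vol E w V / 2})"

datatype 'a hctree = Leaf 'a | Node "'a hctree" "'a hctree"

fun leaf_list :: "'a hctree \<Rightarrow> 'a list" where
  "leaf_list (Leaf x) = [x]"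
| "leaf_list (Node L R) = leaf_list L @ leaf_list R"

definition leaves :: "'a hctree \<Rightarrow> 'a set" where
  "leaves T = set (leaf_list T)"

definition is_hc_tree :: "'a set \<Rightarrow> 'a hctree \<Rightarrow> bool" where
  "is_hc_tree V T \<longleftrightarrow> distinct (leaf_list T) \<and> set (leaf_list T) = V"

fun subtrees :: "'a hctree \<Rightarrow> 'a hctree set" where
  "subtrees (Leaf x) = {Leaf x}"
| "subtrees (Node L R) = insert (Node L R) (subtrees L \<union> subtrees R)"

definition lca :: "'a hctree \<Rightarrow> 'a set \<Rightarrow> 'a hctree" where
  "lca T e = (THE S. S \<in> subtrees T \<and> e \<subseteq> leaves S \<and>
               (\<forall>S'\<in>subtrees T. e \<subseteq> leaves S' \<longrightarrow> S \<in> subtrees S'))"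

definition hc_cost :: "'a set set \<Rightarrow> ('a set \<Rightarrow> real) \<Rightarrow> 'a hctree \<Rightarrow> real" where
  "hc_cost E w T = (\<Sum>e\<in>E. w e * real (card (leaves (lca T e))))"

fun branch_from :: "('a set \<Rightarrow> real) \<Rightarrow> real \<Rightarrow> 'a hctree \<Rightarrow> 'a hctree list" where
  "branch_from vl h (Leaf x) = [Leaf x]"
| "branch_from vl h (Node L R) =
     Node L R # (let C = (if vl (leaves L) \<ge> vl (leaves R) then L else R) in
                 if vl (leaves C) > h then branch_from vl h C else [])"

definition dense_branch :: "'a set \<Rightarrow> 'a set set \<Rightarrow> ('a set \<Rightarrow> real) \<Rightarrow> 'a hctree \<Rightarrow> 'a hctree list" where
  "dense_branch V E w T = branch_from (vol E w) (vol E w V / 2) T"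

fun sibling :: "'a hctree \<Rightarrow> 'a hctree \<Rightarrow> 'a hctree" where
  "sibling (Node L R) C = (if C = L then R else L)"
| "sibling (Leaf x) C = Leaf x"

end

theory Submission
  imports Defs "HOL-Library.Disjoint_Sets"
begin

text \<open>An edge crossing the leaf set of a child of a node N has its lowest common ancestor at or
  above N, so it contributes at least |N| w(e) to the cost. If such children C_j of nodes N_j are
  pairwise disjoint, every edge crosses at most two of them (one per endpoint), hence
  sum_j |N_j| w(C_j, V - C_j) <= 2 cost; and each of these cuts is at least Phi vol(C_j) when
  vol(C_j) <= vol(G)/2. The first bound applies this to the siblings B_i of the dense branch:
  for i < j, B_j lies in A_(j-1), which lies in A_i, while B_i is disjoint from A_i; and
  vol(B_i) <= vol(A_i) makes B_i light. The second bound applies it to the two children of A_k,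
  which are light by the definition of the dense branch; if A_k is a leaf x, it reduces to
  deg(x) <= cost and Phi <= 1.\<close>

section \<open>HC trees\<close>

lemma leaves_Leaf [simp]: "leaves (Leaf x) = {x}"
  by (simp add: leaves_def)

lemma leaves_Node [simp]: "leaves (Node L R) = leaves L \<union> leaves R"
  by (simp add: leaves_def)

lemma leaves_nonempty: "leaves T \<noteq> {}"
  by (induction T) auto

lemma finite_leaves [simp]: "finite (leaves T)"
  by (simp add: leaves_def)

lemma subtrees_refl [simp]: "T \<in> subtrees T"
  by (cases T) auto

lemma subtrees_trans: "S \<in> subtrees T \<Longrightarrow> subtrees S \<subseteq> subtrees T"
  by (induction T) auto

lemma leaves_subtree: "S \<in> subtrees T \<Longrightarrow> leaves S \<subseteq> leaves T"
  by (induction T) auto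

lemma size_subtree: "S \<in> subtrees T \<Longrightarrow> size S \<le> size T"
  by (induction T) auto

lemma size_subtree_less: "S \<in> subtrees T \<Longrightarrow> S \<noteq> T \<Longrightarrow> size S < size T"
  by (induction T) (auto dest: size_subtree)

lemma subtrees_antisym: "S \<in> subtrees T \<Longrightarrow> T \<in> subtrees S \<Longrightarrow> S = T"
  using size_subtree size_subtree_less by fastforce

lemma distinct_leaf_list_subtree:
  "S \<in> subtrees T \<Longrightarrow> distinct (leaf_list T) \<Longrightarrow> distinct (leaf_list S)"
  by (induction T) auto

fun children :: "'a hctree \<Rightarrow> 'a hctree set" where
  "children (Leaf x) = {}"
| "children (Node L R) = {L, R}"

lemma sibling_in_children: "C \<in> children N \<Longrightarrow> sibling N C \<in> children N"
  by (cases N) auto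

lemma leaves_child_sibling:
  "C \<in> children N \<Longrightarrow> leaves N = leaves C \<union> leaves (sibling N C)"
  by (cases N) auto

lemma disjoint_leaves_sibling:
  "distinct (leaf_list N) \<Longrightarrow> C \<in> children N \<Longrightarrow> leaves C \<inter> leaves (sibling N C) = {}"
  by (cases N) (auto simp: leaves_def)

lemma leaves_child_psubset:
  assumes "is_hc_tree V T" "N \<in> subtrees T" "C \<in> children N"
  shows "leaves C \<subset> V"
proof -
  have "distinct (leaf_list N)"
    using assms distinct_leaf_list_subtree by (auto simp: is_hc_tree_def)
  moreover have "leaves N \<subseteq> V"
    using assms leaves_subtree[OF assms(2)] by (simp add: is_hc_tree_def leaves_def)
  ultimately show ?thesis
    using leaves_child_sibling[OF assms(3)] disjoint_leaves_sibling[OF _ assms(3)]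
      leaves_nonempty[of "sibling N C"] by blast
qed

section \<open>Lowest common ancestors\<close>

fun lca_rec :: "'a hctree \<Rightarrow> 'a set \<Rightarrow> 'a hctree" where
  "lca_rec (Leaf x) e = Leaf x"
| "lca_rec (Node L R) e =
     (if e \<subseteq> leaves L then lca_rec L e else if e \<subseteq> leaves R then lca_rec R e else Node L R)"

lemma lca_rec_subtree: "lca_rec T e \<in> subtrees T"
  by (induction T) auto

lemma lca_rec_leaves: "e \<subseteq> leaves T \<Longrightarrow> e \<subseteq> leaves (lca_rec T e)"
  by (induction T) auto

lemma lca_rec_lowest:
  "distinct (leaf_list T) \<Longrightarrow> e \<noteq> {} \<Longrightarrow> S \<in> subtrees T \<Longrightarrow> e \<subseteq> leaves S
   \<Longrightarrow> lca_rec T e \<in> subtrees S"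
proof (induction T)
  case (Node L R)
  have disj: "leaves L \<inter> leaves R = {}"
    using Node.prems(1) by (simp add: leaves_def)
  consider "S = Node L R" | "S \<in> subtrees L" | "S \<in> subtrees R"
    using Node.prems(3) by auto
  then show ?case
  proof cases
    case 1
    then show ?thesis
      using lca_rec_subtree by blast
  next
    case 2
    then have "e \<subseteq> leaves L"
      using Node.prems(4) leaves_subtree by blast
    then show ?thesis
      using Node.IH(1) Node.prems 2 by simp
  next
    case 3
    then have "e \<subseteq> leaves R"
      using Node.prems(4) leaves_subtree by blast
    moreover have "\<not> e \<subseteq> leaves L"
      using calculation Node.prems(2) disj by blast
    ultimately show ?thesis
      using Node.IH(2) Node.prems 3 by simp
  qed
qed simp

lemma lca_eq_lca_rec:
  assumes "distinct (leaf_list T)" "e \<noteq> {}" "e \<subseteq> leaves T"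
  shows "lca T e = lca_rec T e"
  unfolding lca_def
proof (rule the_equality)
  show "lca_rec T e \<in> subtrees T \<and> e \<subseteq> leaves (lca_rec T e) \<and>
    (\<forall>S\<in>subtrees T. e \<subseteq> leaves S \<longrightarrow> lca_rec T e \<in> subtrees S)"
    using lca_rec_subtree lca_rec_leaves[OF assms(3)] lca_rec_lowest[OF assms(1,2)] by blast
next
  fix S assume "S \<in> subtrees T \<and> e \<subseteq> leaves S \<and>
    (\<forall>S'\<in>subtrees T. e \<subseteq> leaves S' \<longrightarrow> S \<in> subtrees S')"
  then show "S = lca_rec T e"
    using subtrees_antisym lca_rec_subtree lca_rec_leaves[OF assms(3)] lca_rec_lowest[OF assms(1,2)]
    by blast
qed

lemma lca_rec_above_crossed_node:
  assumes "distinct (leaf_list T)" "N \<in> subtrees T" "C \<in> children N"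
    and "e \<inter> leaves C \<noteq> {}" "\<not> e \<subseteq> leaves C"
  shows "N \<in> subtrees (lca_rec T e)"
  using assms
proof (induction T)
  case (Node L R)
  have disj: "leaves L \<inter> leaves R = {}"
    using Node.prems(1) by (simp add: leaves_def)
  have "leaves C \<subseteq> leaves N"
    using leaves_child_sibling[OF Node.prems(3)] by blast
  consider "N = Node L R" | "N \<in> subtrees L" | "N \<in> subtrees R"
    using Node.prems(2) by auto
  then show ?case
  proof cases
    case 1
    then have "\<not> e \<subseteq> leaves L" "\<not> e \<subseteq> leaves R"
      using Node.prems(3-5) disj by (auto simp del: leaves_Node)
    then show ?thesis
      using 1 by simp
  next
    case 2
    then have "leaves C \<subseteq> leaves L"
      using \<open>leaves C \<subseteq> leaves N\<close> leaves_subtree by blast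
    then have "\<not> e \<subseteq> leaves R"
      using Node.prems(4) disj by blast
    then show ?thesis
      using Node.IH(1)[OF _ 2 Node.prems(3-5)] Node.prems(1,2) by (cases "e \<subseteq> leaves L") simp_all
  next
    case 3
    then have "leaves C \<subseteq> leaves R"
      using \<open>leaves C \<subseteq> leaves N\<close> leaves_subtree by blast
    then have "\<not> e \<subseteq> leaves L"
      using Node.prems(4) disj by blast
    then show ?thesis
      using Node.IH(2)[OF _ 3 Node.prems(3-5)] Node.prems(1,2) by (cases "e \<subseteq> leaves R") simp_all
  qed
qed simp

lemma card_leaves_lca_ge_crossed_node:
  assumes "is_hc_tree V T" "N \<in> subtrees T" "C \<in> children N"
    and "e \<subseteq> V" "e \<inter> leaves C \<noteq> {}" "\<not> e \<subseteq> leaves C"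
  shows "card (leaves N) \<le> card (leaves (lca T e))"
proof -
  have T: "distinct (leaf_list T)" "leaves T = V"
    using assms(1) by (auto simp: is_hc_tree_def leaves_def)
  then have "lca T e = lca_rec T e"
    using lca_eq_lca_rec assms(4,5) by blast
  moreover have "N \<in> subtrees (lca_rec T e)"
    using lca_rec_above_crossed_node[OF T(1) assms(2,3,5,6)] .
  ultimately show ?thesis
    by (simp add: card_mono leaves_subtree)
qed

section \<open>Dense branches\<close>

lemma branch_from_nth_0 [simp]: "branch_from vl h T ! 0 = T"
  by (cases T) (auto simp: Let_def)

lemma branch_from_nonempty [simp]: "branch_from vl h T \<noteq> []"
  by (cases T) (auto simp: Let_def)

lemma set_branch_from: "set (branch_from vl h T) \<subseteq> subtrees T"
  by (induction vl h T rule: branch_from.induct) (auto simp: Let_def)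

lemma branch_from_step:
  assumes "Suc i < length (branch_from vl h T)"
  shows "branch_from vl h T ! Suc i \<in> children (branch_from vl h T ! i)
    \<and> vl (leaves (sibling (branch_from vl h T ! i) (branch_from vl h T ! Suc i)))
        \<le> vl (leaves (branch_from vl h T ! Suc i))"
  using assms
proof (induction vl h T arbitrary: i rule: branch_from.induct)
  case (2 vl h L R)
  define C where "C = (if vl (leaves L) \<ge> vl (leaves R) then L else R)"
  have "h < vl (leaves C)" and B: "branch_from vl h (Node L R) = Node L R # branch_from vl h C"
    using "2.prems" by (auto simp: C_def Let_def split: if_splits)
  show ?case
  proof (cases i)
    case 0
    then show ?thesis
      using B by (auto simp: C_def)
  next
    case (Suc j)
    then show ?thesis
      using "2.IH"[OF C_def \<open>h < vl (leaves C)\<close>, of j] "2.prems" B by simp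
  qed
qed simp

lemma branch_from_last_children:
  "C \<in> children (last (branch_from vl h T)) \<Longrightarrow> vl (leaves C) \<le> h"
  by (induction vl h T rule: branch_from.induct) (auto simp: Let_def split: if_splits)

lemma branch_from_nested:
  assumes "i \<le> j" "j < length (branch_from vl h T)"
  shows "leaves (branch_from vl h T ! j) \<subseteq> leaves (branch_from vl h T ! i)"
  using assms
proof (induction j)
  case (Suc j)
  then have "leaves (branch_from vl h T ! Suc j) \<subseteq> leaves (branch_from vl h T ! j)"
    using branch_from_step leaves_child_sibling by blast
  with Suc show ?case
    by (cases "i = Suc j") auto
qed simp

lemma disjoint_family_on_branch_siblings:
  fixes vl :: "'a set \<Rightarrow> real" and h :: real
  assumes "distinct (leaf_list T)"
  defines "B \<equiv> branch_from vl h T"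
  shows "disjoint_family_on (\<lambda>i. leaves (sibling (B ! (i - 1)) (B ! i))) {1..length B - 1}"
proof -
  have "leaves (sibling (B ! (i - 1)) (B ! i)) \<inter> leaves (sibling (B ! (j - 1)) (B ! j)) = {}"
    if "i \<in> {1..length B - 1}" "j \<in> {1..length B - 1}" "i < j" for i j
  proof -
    have step: "B ! n \<in> children (B ! (n - 1))" if "n \<in> {1..length B - 1}" for n
    proof -
      have "Suc (n - 1) = n" "Suc (n - 1) < length B"
        using that by auto
      then show ?thesis
        using branch_from_step[of "n - 1" vl h T] unfolding B_def by simp
    qed
    have "i - 1 < length B"
      using that by auto
    then have "B ! (i - 1) \<in> subtrees T"
      using set_branch_from nth_mem unfolding B_def by blast
    then have distinct: "distinct (leaf_list (B ! (i - 1)))"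
      using assms(1) distinct_leaf_list_subtree by blast
    have "leaves (sibling (B ! (j - 1)) (B ! j)) \<subseteq> leaves (B ! (j - 1))"
      using leaves_child_sibling[OF step[OF that(2)]] by blast
    also have "\<dots> \<subseteq> leaves (B ! i)"
      using branch_from_nested[of i "j - 1" vl h T] that unfolding B_def by auto
    finally show ?thesis
      using disjoint_leaves_sibling[OF distinct step[OF that(1)]] by blast
  qed
  then show ?thesis
    unfolding disjoint_family_on_def by (metis inf_commute linorder_neqE_nat)
qed

section \<open>Weighted graphs and conductance\<close>

locale weighted_graph =
  fixes V :: "'a set" and E :: "'a set set" and w :: "'a set \<Rightarrow> real"
  assumes finite_vertices: "finite V"
    and edges: "\<And>e. e \<in> E \<Longrightarrow> e \<subseteq> V \<and> card e = 2"
    and weights_nonneg: "\<And>e. e \<in> E \<Longrightarrow> w e \<ge> 0"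
begin

lemma finite_edges: "finite E"
proof (rule finite_subset)
  show "E \<subseteq> Pow V"
    using edges by auto
  show "finite (Pow V)"
    using finite_vertices by simp
qed

lemma degree_nonneg: "degree E w u \<ge> 0"
  unfolding degree_def by (intro sum_nonneg) (auto intro: weights_nonneg)

lemma vol_nonneg: "vol E w S \<ge> 0"
  unfolding vol_def by (intro sum_nonneg degree_nonneg)

lemma vol_mono: "finite S' \<Longrightarrow> S \<subseteq> S' \<Longrightarrow> vol E w S \<le> vol E w S'"
  unfolding vol_def by (intro sum_mono2 degree_nonneg)

lemma vol_Un_disjoint:
  "finite S \<Longrightarrow> finite S' \<Longrightarrow> S \<inter> S' = {} \<Longrightarrow> vol E w (S \<union> S') = vol E w S + vol E w S'"
  unfolding vol_def by (rule sum.union_disjoint)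

lemma cut_weight_nonneg: "cut_weight V E w S \<ge> 0"
  unfolding cut_weight_def by (intro sum_nonneg) (auto intro: weights_nonneg)

lemma cut_weight_singleton: "x \<in> V \<Longrightarrow> cut_weight V E w {x} = degree E w x"
proof -
  assume "x \<in> V"
  have "e \<inter> (V - {x}) \<noteq> {}" if "e \<in> E" "x \<in> e" for e
  proof -
    obtain a b where "e = {a, b}" "a \<noteq> b"
      using edges[OF \<open>e \<in> E\<close>] by (meson card_2_iff)
    then show ?thesis
      using edges[OF \<open>e \<in> E\<close>] by auto
  qed
  then have "{e\<in>E. e \<inter> {x} \<noteq> {} \<and> e \<inter> (V - {x}) \<noteq> {}} = {e\<in>E. x \<in> e}"
    by auto
  then show ?thesis
    unfolding cut_weight_def degree_def by simp
qed

lemma conductance_le_set_conductance: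
  assumes "S \<noteq> {}" "S \<subset> V" "vol E w S \<le> vol E w V / 2"
  shows "conductance V E w \<le> set_conductance V E w S"
proof -
  let ?F = "{S. S \<noteq> {} \<and> S \<subset> V \<and> vol E w S \<le> vol E w V / 2}"
  have "?F \<subseteq> Pow V"
    by auto
  then have "finite ?F"
    using finite_vertices finite_subset by auto
  moreover have "S \<in> ?F"
    using assms by blast
  ultimately show ?thesis
    unfolding conductance_def by (intro Min_le finite_imageI imageI)
qed

lemma conductance_mult_vol_le_cut_weight:
  assumes "S \<noteq> {}" "S \<subset> V" "vol E w S \<le> vol E w V / 2"
  shows "conductance V E w * vol E w S \<le> cut_weight V E w S"
proof (cases "vol E w S = 0")
  case True
  then show ?thesis
    using cut_weight_nonneg by simp
next
  case False
  then have "vol E w S > 0"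
    using vol_nonneg[of S] by simp
  then show ?thesis
    using conductance_le_set_conductance[OF assms]
    unfolding set_conductance_def by (simp add: pos_le_divide_eq)
qed

lemma conductance_le_1:
  assumes "card V \<ge> 2"
  shows "conductance V E w \<le> 1"
proof -
  have "\<not> card V \<le> Suc 0"
    using assms by simp
  then obtain a b where ab: "a \<in> V" "b \<in> V" "a \<noteq> b"
    using card_le_Suc0_iff_eq[OF finite_vertices] by blast
  have "degree E w a + degree E w b = vol E w {a, b}"
    using ab by (simp add: vol_def)
  also have "\<dots> \<le> vol E w V"
    using ab finite_vertices by (intro vol_mono) auto
  finally have "degree E w a \<le> vol E w V / 2 \<or> degree E w b \<le> vol E w V / 2"
    by linarith
  then obtain x where x: "x \<in> {a, b}" "degree E w x \<le> vol E w V / 2"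
    by blast
  then have "x \<in> V" "{x} \<subset> V"
    using ab by auto
  have "conductance V E w \<le> set_conductance V E w {x}"
    using conductance_le_set_conductance[of "{x}"] x \<open>{x} \<subset> V\<close> by (simp add: vol_def)
  also have "\<dots> \<le> 1"
    unfolding set_conductance_def using cut_weight_singleton[OF \<open>x \<in> V\<close>] by (simp add: vol_def)
  finally show ?thesis .
qed

end

section \<open>Lower bounds on the cost\<close>

lemma card_disjoint_family_meeting_pair:
  assumes "finite J" "disjoint_family_on S J"
  shows "card {j\<in>J. {a, b} \<inter> S j \<noteq> {}} \<le> 2"
proof -
  have at_most_one: "card {j\<in>J. x \<in> S j} \<le> 1" for x
    using assms unfolding disjoint_family_on_def
    by (subst One_nat_def, subst card_le_Suc0_iff_eq) auto
  have "card {j\<in>J. {a, b} \<inter> S j \<noteq> {}} \<le> card ({j\<in>J. a \<in> S j} \<union> {j\<in>J. b \<in> S j})"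
    using assms(1) by (intro card_mono) auto
  also have "\<dots> \<le> card {j\<in>J. a \<in> S j} + card {j\<in>J. b \<in> S j}"
    by (rule card_Un_le)
  also have "\<dots> \<le> 2"
    using at_most_one[of a] at_most_one[of b] by linarith
  finally show ?thesis .
qed

context weighted_graph
begin

lemma sum_disjoint_cut_weights_le:
  fixes S :: "'j \<Rightarrow> 'a set" and c :: "'j \<Rightarrow> real" and f :: "'a set \<Rightarrow> real"
  assumes "finite J" "disjoint_family_on S J"
    and f_nonneg: "\<And>e. e \<in> E \<Longrightarrow> f e \<ge> 0"
    and crossing: "\<And>j e. j \<in> J \<Longrightarrow> e \<in> E \<Longrightarrow> e \<inter> S j \<noteq> {} \<Longrightarrow> e \<inter> (V - S j) \<noteq> {} \<Longrightarrow> c j \<le> f e"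
  shows "(\<Sum>j\<in>J. c j * cut_weight V E w (S j)) \<le> 2 * (\<Sum>e\<in>E. w e * f e)"
proof -
  define crosses where "crosses j e \<longleftrightarrow> e \<inter> S j \<noteq> {} \<and> e \<inter> (V - S j) \<noteq> {}" for j e
  have "(\<Sum>j\<in>J. c j * cut_weight V E w (S j)) = (\<Sum>j\<in>J. \<Sum>e\<in>E. if crosses j e then c j * w e else 0)"
    unfolding cut_weight_def crosses_def
    by (simp add: sum_distrib_left sum.inter_filter[OF finite_edges] if_distrib cong: if_cong)
  also have "\<dots> = (\<Sum>e\<in>E. \<Sum>j\<in>J. if crosses j e then c j * w e else 0)"
    by (rule sum.swap)
  also have "\<dots> = (\<Sum>e\<in>E. w e * (\<Sum>j\<in>{j\<in>J. crosses j e}. c j))"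
    by (simp add: sum.inter_filter[OF \<open>finite J\<close>] sum_distrib_left if_distrib mult.commute
        cong: if_cong)
  also have "\<dots> \<le> (\<Sum>e\<in>E. w e * (2 * f e))"
  proof (intro sum_mono mult_left_mono weights_nonneg)
    fix e assume "e \<in> E"
    obtain a b where "e = {a, b}"
      using edges[OF \<open>e \<in> E\<close>] by (meson card_2_iff)
    then have "card {j\<in>J. crosses j e} \<le> card {j\<in>J. {a, b} \<inter> S j \<noteq> {}}"
      unfolding crosses_def using \<open>finite J\<close> by (intro card_mono) auto
    then have "real (card {j\<in>J. crosses j e}) \<le> 2"
      using card_disjoint_family_meeting_pair[OF assms(1,2), of a b] by linarith
    have "(\<Sum>j\<in>{j\<in>J. crosses j e}. c j) \<le> (\<Sum>j\<in>{j\<in>J. crosses j e}. f e)"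
      using crossing \<open>e \<in> E\<close> unfolding crosses_def by (intro sum_mono) auto
    also have "\<dots> = real (card {j\<in>J. crosses j e}) * f e"
      by simp
    also have "\<dots> \<le> 2 * f e"
      using \<open>real (card {j\<in>J. crosses j e}) \<le> 2\<close> f_nonneg[OF \<open>e \<in> E\<close>] by (rule mult_right_mono)
    finally show "(\<Sum>j\<in>{j\<in>J. crosses j e}. c j) \<le> 2 * f e" .
  qed
  also have "\<dots> = 2 * (\<Sum>e\<in>E. w e * f e)"
    by (simp add: sum_distrib_left algebra_simps)
  finally show ?thesis .
qed

lemma degree_le_hc_cost: "degree E w x \<le> hc_cost E w T"
proof -
  have "degree E w x \<le> (\<Sum>e\<in>E. w e)"
    unfolding degree_def using finite_edges by (rule sum_mono2) (auto intro: weights_nonneg)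
  also have "\<dots> \<le> (\<Sum>e\<in>E. w e * real (card (leaves (lca T e))))"
  proof (intro sum_mono)
    fix e assume "e \<in> E"
    have "1 \<le> card (leaves (lca T e))"
      using leaves_nonempty[of "lca T e"] by (simp add: Suc_leI card_gt_0_iff)
    then show "w e \<le> w e * real (card (leaves (lca T e)))"
      using weights_nonneg[OF \<open>e \<in> E\<close>] by (simp add: mult_le_cancel_left1)
  qed
  finally show ?thesis
    unfolding hc_cost_def .
qed

lemma hc_cost_ge_child_cuts:
  assumes hc: "is_hc_tree V T" and "finite J"
    and N: "\<And>j. j \<in> J \<Longrightarrow> N j \<in> subtrees T"
    and C: "\<And>j. j \<in> J \<Longrightarrow> C j \<in> children (N j)"
    and disj: "disjoint_family_on (\<lambda>j. leaves (C j)) J"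
  shows "(\<Sum>j\<in>J. real (card (leaves (N j))) * cut_weight V E w (leaves (C j))) \<le> 2 * hc_cost E w T"
  unfolding hc_cost_def
proof (rule sum_disjoint_cut_weights_le[OF \<open>finite J\<close> disj])
  fix j e assume "j \<in> J" "e \<in> E" "e \<inter> leaves (C j) \<noteq> {}" "e \<inter> (V - leaves (C j)) \<noteq> {}"
  then show "real (card (leaves (N j))) \<le> real (card (leaves (lca T e)))"
    using card_leaves_lca_ge_crossed_node[OF hc N C] edges by auto
qed simp

lemma hc_cost_ge_conductance_children:
  assumes hc: "is_hc_tree V T" and "finite J"
    and N: "\<And>j. j \<in> J \<Longrightarrow> N j \<in> subtrees T"
    and C: "\<And>j. j \<in> J \<Longrightarrow> C j \<in> children (N j)"
    and disj: "disjoint_family_on (\<lambda>j. leaves (C j)) J"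
    and balanced: "\<And>j. j \<in> J \<Longrightarrow> vol E w (leaves (C j)) \<le> vol E w V / 2"
  shows "conductance V E w / 2 * (\<Sum>j\<in>J. real (card (leaves (N j))) * vol E w (leaves (C j)))
    \<le> hc_cost E w T"
proof -
  have "conductance V E w * (\<Sum>j\<in>J. real (card (leaves (N j))) * vol E w (leaves (C j)))
      = (\<Sum>j\<in>J. real (card (leaves (N j))) * (conductance V E w * vol E w (leaves (C j))))"
    by (simp add: sum_distrib_left algebra_simps)
  also have "\<dots> \<le> (\<Sum>j\<in>J. real (card (leaves (N j))) * cut_weight V E w (leaves (C j)))"
    using leaves_nonempty leaves_child_psubset[OF hc N C] balanced
    by (intro sum_mono mult_left_mono conductance_mult_vol_le_cut_weight) auto
  also have "\<dots> \<le> 2 * hc_cost E w T"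
    by (rule hc_cost_ge_child_cuts[OF assms(1-5)])
  finally show ?thesis
    by simp
qed

lemma vol_sibling_le_half:
  assumes hc: "is_hc_tree V T" and "N \<in> subtrees T" "C \<in> children N"
    and "vol E w (leaves (sibling N C)) \<le> vol E w (leaves C)"
  shows "vol E w (leaves (sibling N C)) \<le> vol E w V / 2"
proof -
  have "distinct (leaf_list N)"
    using hc assms(2) distinct_leaf_list_subtree by (auto simp: is_hc_tree_def)
  then have "vol E w (leaves N) = vol E w (leaves C) + vol E w (leaves (sibling N C))"
    using leaves_child_sibling[OF assms(3)] disjoint_leaves_sibling[OF _ assms(3)]
    by (simp add: vol_Un_disjoint)
  moreover have "vol E w (leaves N) \<le> vol E w V"
    using hc leaves_subtree[OF assms(2)] finite_vertices
    by (intro vol_mono) (auto simp: is_hc_tree_def leaves_def)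
  ultimately show ?thesis
    using assms(4) by linarith
qed

lemma hc_cost_ge_dense_branch_siblings:
  assumes hc: "is_hc_tree V T"
  defines "B \<equiv> dense_branch V E w T"
  shows "conductance V E w / 2 *
      (\<Sum>i=1..length B - 1. real (card (leaves (B ! (i - 1)))) *
                             vol E w (leaves (sibling (B ! (i - 1)) (B ! i))))
    \<le> hc_cost E w T"
proof (rule hc_cost_ge_conductance_children[OF hc finite_atLeastAtMost])
  fix i assume "i \<in> {1..length B - 1}"
  then have "Suc (i - 1) = i" "Suc (i - 1) < length B"
    by auto
  then have step: "B ! i \<in> children (B ! (i - 1))"
      "vol E w (leaves (sibling (B ! (i - 1)) (B ! i))) \<le> vol E w (leaves (B ! i))"
    using branch_from_step[of "i - 1" "vol E w" "vol E w V / 2" T] unfolding B_def dense_branch_def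
    by simp_all
  have "B ! (i - 1) \<in> set B"
    using \<open>Suc (i - 1) < length B\<close> by simp
  then show "B ! (i - 1) \<in> subtrees T"
    using set_branch_from unfolding B_def dense_branch_def by blast
  then show "vol E w (leaves (sibling (B ! (i - 1)) (B ! i))) \<le> vol E w V / 2"
    using vol_sibling_le_half[OF hc _ step(1,2)] by blast
  show "sibling (B ! (i - 1)) (B ! i) \<in> children (B ! (i - 1))"
    using sibling_in_children[OF step(1)] .
next
  show "disjoint_family_on (\<lambda>i. leaves (sibling (B ! (i - 1)) (B ! i))) {1..length B - 1}"
    using disjoint_family_on_branch_siblings hc unfolding B_def dense_branch_def is_hc_tree_def
    by blast
qed

lemma hc_cost_ge_dense_branch_last:
  assumes hc: "is_hc_tree V T" and "card V \<ge> 2"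
  defines "A \<equiv> last (dense_branch V E w T)"
  shows "conductance V E w / 2 * real (card (leaves A)) * vol E w (leaves A) \<le> hc_cost E w T"
proof -
  have A: "A \<in> subtrees T"
    using set_branch_from last_in_set[OF branch_from_nonempty] unfolding A_def dense_branch_def
    by blast
  show ?thesis
  proof (cases A)
    case (Leaf x)
    then have "x \<in> V"
      using hc leaves_subtree[OF A] by (auto simp: is_hc_tree_def leaves_def)
    have "conductance V E w / 2 \<le> 1"
      using conductance_le_1[OF assms(2)] by simp
    from mult_right_mono[OF this degree_nonneg[of x]]
    have "conductance V E w / 2 * degree E w x \<le> degree E w x"
      by simp
    then show ?thesis
      using degree_le_hc_cost[of x T] Leaf by (simp add: vol_def)
  next
    case (Node L R)
    have distinct: "distinct (leaf_list A)"
      using hc A distinct_leaf_list_subtree by (auto simp: is_hc_tree_def)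
    then have "L \<noteq> R"
      using Node leaves_nonempty[of L] by (auto simp: leaves_def)
    have "conductance V E w / 2 * (\<Sum>C\<in>children A. real (card (leaves A)) * vol E w (leaves C))
        \<le> hc_cost E w T"
    proof (rule hc_cost_ge_conductance_children[OF hc])
      show "disjoint_family_on (\<lambda>C. leaves C) (children A)"
        using distinct Node by (auto simp: disjoint_family_on_def leaves_def)
      show "vol E w (leaves C) \<le> vol E w V / 2" if "C \<in> children A" for C
        using branch_from_last_children that unfolding A_def dense_branch_def by blast
    qed (use A Node in auto)
    moreover have "(\<Sum>C\<in>children A. vol E w (leaves C)) = vol E w (leaves A)"
      using Node \<open>L \<noteq> R\<close> distinct by (simp add: vol_Un_disjoint leaves_def)
    ultimately show ?thesis
      by (simp add: sum_distrib_left[symmetric] mult.assoc)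
  qed
qed

end

theorem mainTheorem4:
  fixes V :: "'a set" and E :: "'a set set" and w :: "'a set \<Rightarrow> real" and T :: "'a hctree"
  assumes finV: "finite V"
    and twoV: "card V \<ge> 2"
    and edges: "\<forall>e\<in>E. e \<subseteq> V \<and> card e = 2"
    and wpos: "\<forall>e\<in>E. w e > 0"
    and hc: "is_hc_tree V T"
    and As: "As = dense_branch V E w T"
    and k: "k = length As - 1"
  shows "hc_cost E w T \<ge> conductance V E w / 2 *
           (\<Sum>i=1..k. real (card (leaves (As ! (i - 1)))) *
                       vol E w (leaves (sibling (As ! (i - 1)) (As ! i)))) \<and>
         hc_cost E w T \<ge> conductance V E w / 2 *
           real (card (leaves (As ! k))) * vol E w (leaves (As ! k))"
proof -
  interpret weighted_graph V E w
    using finV edges wpos by unfold_locales (auto simp: less_imp_le)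
  have "As ! k = last As"
    using As k by (simp add: dense_branch_def last_conv_nth)
  then show ?thesis
    using hc_cost_ge_dense_branch_siblings[OF hc] hc_cost_ge_dense_branch_last[OF hc twoV] As k
    by simp
qed

end
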